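(* Let $M=(I,O,T,t_0,\tau,\mathit{out})$ be a Moore system, let $\Phi$ be a CTL* state formula over inputs $I$ and outputs $O$, and let $A=(2^O,2^I,Q,q_0,\delta,\mathit{Acc})$ be an alternating hesitant tree automaton accepting exactly the computation trees satisfying $\Phi$. Then $M\models\Phi$ if and only if there exist functions $\mathit{rch}:Q\times T\to\{\mathit{true},\mathit{false}\}$ and $\rho:Q\times T\to\mathbb N$ satisfying $$\mathit{rch}(q_0,t_0)\wedge\bigwedge_{(q,t)\in Q\times T}\Big[\mathit{rch}(q,t)\rightarrow\delta(q,\mathit{out}(t))\big[(d,q')\mapsto \mathit{rch}(q',\tau(t,d))\wedge\rho(q,t)\triangleright_{q,q'}\rho(q',\tau(t,d))\big]\Big],$$ where the substitution replaces every atom $(d,q')$ of the positive Boolean formula $\delta(q,\mathit{out}(t))$ by the indicated conjunction, and $\triangleright_{q,q'}$ is: if $q,q'$ lie in the same set $Q^N_j$, the B\"uchi comparison ($\mathit{true}$ if $q\in\mathit{Acc}$, and $\rho(q,t)>\rho(q',\tau(t,d))$ otherwise); if $q,q'$ lie in the same set $Q^U_j$, the co-B\"uchi comparison ($\rho(q,t)>\rho(q',\tau(t,d))$ if $q\in\mathit{Acc}$, and $\rho(q,t)\ge\rho(q',\tau(t,d))$ otherwise); otherwise $\mathit{true}$.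
   Context: A Moore system has disjoint finite inputs $I$, outputs $O$, finite states $T$, initial state $t_0$, total transition function $\tau:T\times 2^I\to T$ and output function $\mathit{out}:T\to 2^O$; its computation tree has nodes $(2^I)^*$, node $w$ labelled $\mathit{out}(\tau(t_0,w))$, and $M\models\Phi$ means this tree satisfies $\Phi$ at the root. CTL* with inputs: state formulas are built from $\mathit{true},\mathit{false}$, outputs and negated outputs, $\wedge,\vee$, and $\mathsf A\varphi,\mathsf E\varphi$ for path formulas $\varphi$; path formulas are built from state formulas, inputs and negated inputs, $\wedge,\vee,\mathsf X,\mathsf U,\mathsf R$; on a tree path $n_1n_2\dots$ with $n_2=n_1\cdot e$, an input $i$ holds iff $i\in e$; otherwise semantics is standard. An alternating tree automaton $(2^O,2^I,Q,q_0,\delta,\mathit{acc})$ has $\delta:Q\times 2^O\to\mathcal B^+(2^I\times Q)$ (positive Boolean formulas, total with respect to directions); a run-tree on a computation tree labels the root with $(\epsilon,q_0)$ and, for a node labelled $(n,q)$, has children labelled $(n\cdot d_j,q_j)$ for a set $\{(d_j,q_j)\}$ satisfying $\delta(q,l(n))$; the automaton accepts if some run-tree has all branches accepting. It is hesitant if $Q$ is partitioned into sets $Q^N_1,\dots,Q^N_{k_N},Q^U_1,\dots,Q^U_{k_U}$ with a partial order on them such that for $q\in Q^N_j$ the atoms of $\delta(q,a)$ inside $Q^N_j$ are disjunctively related and all other atoms lie in lower sets, and dually for $q\in Q^U_j$ with conjunctively related atoms; a branch with state sequence $\pi$ is accepting iff either it eventually stays in some $Q^U_j$ and visits $\mathit{Acc}$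 finitely often, or eventually stays in some $Q^N_j$ and visits $\mathit{Acc}$ infinitely often. *)

theory Defs
  imports Main "HOL-Library.Disjoint_Sets"
begin

text \<open>Directions of the
computation tree are subsets of the inputs, labels are subsets of the outputs.\<close>

record ('a, 's) moore =
  m_inputs  :: "'a set"
  m_outputs :: "'a set"
  m_states  :: "'s set"
  m_init    :: 's
  m_trans   :: "'s \<Rightarrow> 'a set \<Rightarrow> 's"
  m_out     :: "'s \<Rightarrow> 'a set"

definition moore_system :: "('a, 's) moore \<Rightarrow> bool" where
  "moore_system M \<longleftrightarrow>
     finite (m_inputs M) \<and> finite (m_outputs M) \<and> m_inputs M \<inter> m_outputs M = {} \<and>
     finite (m_states M) \<and> m_init M \<in> m_states M \<and>
     (\<forall>t \<in> m_states M. \<forall>e. e \<subseteq> m_inputs M \<longrightarrow> m_trans M t e \<in> m_states M) \<and>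
     (\<forall>t \<in> m_states M. m_out M t \<subseteq> m_outputs M)"

definition m_run :: "('a, 's) moore \<Rightarrow> 's \<Rightarrow> 'a set list \<Rightarrow> 's" where
  "m_run M t w = foldl (m_trans M) t w"

text \<open>Trees are functions from nodes (lists of directions) to labels; only nodes in
 \<open>lists (Pow I)\<close> are relevant.\<close>
definition comp_tree :: "('a, 's) moore \<Rightarrow> 'a set list \<Rightarrow> 'a set" where
  "comp_tree M w = m_out M (m_run M (m_init M) w)"

datatype 'a sform =
    STrue | SFalse | SOut 'a | SNOut 'a
  | SAnd "'a sform" "'a sform" | SOr "'a sform" "'a sform"
  | SA "'a pform" | SE "'a pform"
and 'a pform =
    PState "'a sform" | PIn 'a | PNIn 'a
  | PAnd "'a pform" "'a pform" | POr "'a pform" "'a pform"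
  | PX "'a pform" | PU "'a pform" "'a pform" | PR "'a pform" "'a pform"

primrec wf_sform :: "'a set \<Rightarrow> 'a set \<Rightarrow> 'a sform \<Rightarrow> bool"
and wf_pform :: "'a set \<Rightarrow> 'a set \<Rightarrow> 'a pform \<Rightarrow> bool" where
  "wf_sform Ins Outs STrue = True"
| "wf_sform Ins Outs SFalse = True"
| "wf_sform Ins Outs (SOut o') = (o' \<in> Outs)"
| "wf_sform Ins Outs (SNOut o') = (o' \<in> Outs)"
| "wf_sform Ins Outs (SAnd f g) = (wf_sform Ins Outs f \<and> wf_sform Ins Outs g)"
| "wf_sform Ins Outs (SOr f g) = (wf_sform Ins Outs f \<and> wf_sform Ins Outs g)"
| "wf_sform Ins Outs (SA p) = wf_pform Ins Outs p"
| "wf_sform Ins Outs (SE p) = wf_pform Ins Outs p"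
| "wf_pform Ins Outs (PState f) = wf_sform Ins Outs f"
| "wf_pform Ins Outs (PIn i) = (i \<in> Ins)"
| "wf_pform Ins Outs (PNIn i) = (i \<in> Ins)"
| "wf_pform Ins Outs (PAnd p q) = (wf_pform Ins Outs p \<and> wf_pform Ins Outs q)"
| "wf_pform Ins Outs (POr p q) = (wf_pform Ins Outs p \<and> wf_pform Ins Outs q)"
| "wf_pform Ins Outs (PX p) = wf_pform Ins Outs p"
| "wf_pform Ins Outs (PU p q) = (wf_pform Ins Outs p \<and> wf_pform Ins Outs q)"
| "wf_pform Ins Outs (PR p q) = (wf_pform Ins Outs p \<and> wf_pform Ins Outs q)"

text \<open>A tree path from node \<open>n\<close> is given by its sequence of directions
 \<open>ds\<close> (with \<open>n\<^sub>1 = n\<close>, \<open>n\<^sub>{k+1} = n\<^sub>k \<cdot> ds k\<close>).\<close>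
definition path_node :: "'a set list \<Rightarrow> (nat \<Rightarrow> 'a set) \<Rightarrow> nat \<Rightarrow> 'a set list" where
  "path_node n ds k = n @ map ds [0..<k]"

definition path_shift :: "(nat \<Rightarrow> 'a set) \<Rightarrow> nat \<Rightarrow> nat \<Rightarrow> 'a set" where
  "path_shift ds k = (\<lambda>m. ds (m + k))"

primrec ssat :: "'a set \<Rightarrow> ('a set list \<Rightarrow> 'a set) \<Rightarrow> 'a set list \<Rightarrow> 'a sform \<Rightarrow> bool"
and psat :: "'a set \<Rightarrow> ('a set list \<Rightarrow> 'a set) \<Rightarrow> 'a set list \<Rightarrow> (nat \<Rightarrow> 'a set) \<Rightarrow> 'a pform \<Rightarrow> bool"
where
  "ssat I l n STrue = True"
| "ssat I l n SFalse = False"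
| "ssat I l n (SOut o') = (o' \<in> l n)"
| "ssat I l n (SNOut o') = (o' \<notin> l n)"
| "ssat I l n (SAnd f g) = (ssat I l n f \<and> ssat I l n g)"
| "ssat I l n (SOr f g) = (ssat I l n f \<or> ssat I l n g)"
| "ssat I l n (SA p) = (\<forall>ds. (\<forall>k. ds k \<subseteq> I) \<longrightarrow> psat I l n ds p)"
| "ssat I l n (SE p) = (\<exists>ds. (\<forall>k. ds k \<subseteq> I) \<and> psat I l n ds p)"
| "psat I l n ds (PState f) = ssat I l n f"
| "psat I l n ds (PIn i) = (i \<in> ds 0)"
| "psat I l n ds (PNIn i) = (i \<notin> ds 0)"
| "psat I l n ds (PAnd p q) = (psat I l n ds p \<and> psat I l n ds q)"
| "psat I l n ds (POr p q) = (psat I l n ds p \<or> psat I l n ds q)"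
| "psat I l n ds (PX p) = psat I l (path_node n ds 1) (path_shift ds 1) p"
| "psat I l n ds (PU p q) =
     (\<exists>k. psat I l (path_node n ds k) (path_shift ds k) q \<and>
          (\<forall>j<k. psat I l (path_node n ds j) (path_shift ds j) p))"
| "psat I l n ds (PR p q) =
     (\<forall>k. psat I l (path_node n ds k) (path_shift ds k) q \<or>
          (\<exists>j<k. psat I l (path_node n ds j) (path_shift ds j) p))"

definition tree_sat :: "'a set \<Rightarrow> ('a set list \<Rightarrow> 'a set) \<Rightarrow> 'a sform \<Rightarrow> bool" where
  "tree_sat I l \<Phi> = ssat I l [] \<Phi>"

definition moore_models :: "('a, 's) moore \<Rightarrow> 'a sform \<Rightarrow> bool" where
  "moore_models M \<Phi> = tree_sat (m_inputs M) (comp_tree M) \<Phi>"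

datatype 'x pbf = BTrue | BFalse | BAtom 'x | BAnd "'x pbf" "'x pbf" | BOr "'x pbf" "'x pbf"

primrec pbf_eval :: "('x \<Rightarrow> bool) \<Rightarrow> 'x pbf \<Rightarrow> bool" where
  "pbf_eval v BTrue = True"
| "pbf_eval v BFalse = False"
| "pbf_eval v (BAtom x) = v x"
| "pbf_eval v (BAnd f g) = (pbf_eval v f \<and> pbf_eval v g)"
| "pbf_eval v (BOr f g) = (pbf_eval v f \<or> pbf_eval v g)"

definition pbf_sat :: "'x set \<Rightarrow> 'x pbf \<Rightarrow> bool" where
  "pbf_sat S f = pbf_eval (\<lambda>x. x \<in> S) f"

primrec pbf_atoms :: "'x pbf \<Rightarrow> 'x set" where
  "pbf_atoms BTrue = {}"
| "pbf_atoms BFalse = {}"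
| "pbf_atoms (BAtom x) = {x}"
| "pbf_atoms (BAnd f g) = pbf_atoms f \<union> pbf_atoms g"
| "pbf_atoms (BOr f g) = pbf_atoms f \<union> pbf_atoms g"

primrec disj_related :: "'q set \<Rightarrow> ('d \<times> 'q) pbf \<Rightarrow> bool" where
  "disj_related B BTrue = True"
| "disj_related B BFalse = True"
| "disj_related B (BAtom x) = True"
| "disj_related B (BAnd f g) = (disj_related B f \<and> disj_related B g \<and>
     (snd ` pbf_atoms f \<inter> B = {} \<or> snd ` pbf_atoms g \<inter> B = {}))"
| "disj_related B (BOr f g) = (disj_related B f \<and> disj_related B g)"

primrec conj_related :: "'q set \<Rightarrow> ('d \<times> 'q) pbf \<Rightarrow> bool" where
  "conj_related B BTrue = True"
| "conj_related B BFalse = True"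
| "conj_related B (BAtom x) = True"
| "conj_related B (BAnd f g) = (conj_related B f \<and> conj_related B g)"
| "conj_related B (BOr f g) = (conj_related B f \<and> conj_related B g \<and>
     (snd ` pbf_atoms f \<inter> B = {} \<or> snd ` pbf_atoms g \<inter> B = {}))"

record ('a, 'q) aht =
  a_states :: "'q set"
  a_init   :: 'q
  a_delta  :: "'q \<Rightarrow> 'a set \<Rightarrow> ('a set \<times> 'q) pbf"
  a_acc    :: "'q set"
  a_Nblocks :: "'q set set"
  a_Ublocks :: "'q set set"
  a_order  :: "('q set \<times> 'q set) set"

definition hesitant_ata :: "'a set \<Rightarrow> 'a set \<Rightarrow> ('a, 'q) aht \<Rightarrow> bool" where
  "hesitant_ata Ins Outs A \<longleftrightarrow>
     finite (a_states A) \<and> a_init A \<in> a_states A \<and> a_acc A \<subseteq> a_states A \<and>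
     (\<forall>q \<in> a_states A. \<forall>a. a \<subseteq> Outs \<longrightarrow> pbf_atoms (a_delta A q a) \<subseteq> Pow Ins \<times> a_states A) \<and>
     a_Nblocks A \<inter> a_Ublocks A = {} \<and>
     partition_on (a_states A) (a_Nblocks A \<union> a_Ublocks A) \<and>
     partial_order_on (a_Nblocks A \<union> a_Ublocks A) (a_order A) \<and>
     (\<forall>B \<in> a_Nblocks A \<union> a_Ublocks A. \<forall>q \<in> B. \<forall>a. a \<subseteq> Outs \<longrightarrow>
        (\<forall>x \<in> pbf_atoms (a_delta A q a). snd x \<notin> B \<longrightarrow>
           (\<exists>B' \<in> a_Nblocks A \<union> a_Ublocks A. snd x \<in> B' \<and> (B', B) \<in> a_order A \<and> B' \<noteq> B)) \<and>
        (B \<in> a_Nblocks A \<longrightarrow> disj_related B (a_delta A q a)) \<and>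
        (B \<in> a_Ublocks A \<longrightarrow> conj_related B (a_delta A q a)))"

text \<open>A run-tree on the tree l is represented by the set of label sequences
 along its nodes: the node reached by the list \<open>[(d\<^sub>1,q\<^sub>1),...,(d\<^sub>k,q\<^sub>k)]\<close> is
 labelled \<open>(d\<^sub>1...d\<^sub>k, q\<^sub>k)\<close> (root: \<open>(\<epsilon>, q\<^sub>0)\<close>).  Children of a node carry
 pairwise distinct labels forming a set that satisfies \<open>\<delta>\<close>, so a run-tree is
 determined by this set.\<close>
definition run_state :: "('a, 'q) aht \<Rightarrow> ('a set \<times> 'q) list \<Rightarrow> 'q" where
  "run_state A x = (if x = [] then a_init A else snd (last x))"

definition run_node :: "('a set \<times> 'q) list \<Rightarrow> 'a set list" where
  "run_node x = map fst x"

definition is_run :: "'a set \<Rightarrow> ('a, 'q) aht \<Rightarrow> ('a set list \<Rightarrow> 'a set)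
                      \<Rightarrow> ('a set \<times> 'q) list set \<Rightarrow> bool" where
  "is_run I A l R \<longleftrightarrow>
     [] \<in> R \<and> (\<forall>x y. x @ [y] \<in> R \<longrightarrow> x \<in> R) \<and>
     (\<forall>x \<in> R. {y. x @ [y] \<in> R} \<subseteq> Pow I \<times> a_states A \<and>
              pbf_sat {y. x @ [y] \<in> R} (a_delta A (run_state A x) (l (run_node x))))"

definition hesitant_accepting :: "('a, 'q) aht \<Rightarrow> (nat \<Rightarrow> 'q) \<Rightarrow> bool" where
  "hesitant_accepting A \<pi> \<longleftrightarrow>
     (\<exists>B \<in> a_Ublocks A. (\<exists>k. \<forall>m\<ge>k. \<pi> m \<in> B) \<and> finite {m. \<pi> m \<in> a_acc A}) \<or>
     (\<exists>B \<in> a_Nblocks A. (\<exists>k. \<forall>m\<ge>k. \<pi> m \<in> B) \<and> infinite {m. \<pi> m \<in> a_acc A})"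

text \<open>Infinite branches of a run-tree are given by sequences \<open>\<beta>\<close> of child labels;
 the state sequence of the branch starts with \<open>q\<^sub>0\<close>.  (Finite branches end in a
 node whose obligation is satisfied by the empty set and impose no condition.)\<close>
definition accepts :: "'a set \<Rightarrow> ('a, 'q) aht \<Rightarrow> ('a set list \<Rightarrow> 'a set) \<Rightarrow> bool" where
  "accepts I A l \<longleftrightarrow>
     (\<exists>R. is_run I A l R \<and>
        (\<forall>\<beta>. (\<forall>k. map \<beta> [0..<k] \<in> R) \<longrightarrow>
              hesitant_accepting A (\<lambda>m. if m = 0 then a_init A else snd (\<beta> (m - 1)))))"

definition rank_cmp :: "('a, 'q) aht \<Rightarrow> 'q \<Rightarrow> 'q \<Rightarrow> nat \<Rightarrow> nat \<Rightarrow> bool" where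
  "rank_cmp A q q' r r' =
     (if \<exists>B \<in> a_Nblocks A. q \<in> B \<and> q' \<in> B then (if q \<in> a_acc A then True else r > r')
      else if \<exists>B \<in> a_Ublocks A. q \<in> B \<and> q' \<in> B then (if q \<in> a_acc A then r > r' else r \<ge> r')
      else True)"

definition rank_constraint ::
  "('a, 's) moore \<Rightarrow> ('a, 'q) aht \<Rightarrow> ('q \<Rightarrow> 's \<Rightarrow> bool) \<Rightarrow> ('q \<Rightarrow> 's \<Rightarrow> nat) \<Rightarrow> bool" where
  "rank_constraint M A rch \<rho> \<longleftrightarrow>
     rch (a_init A) (m_init M) \<and>
     (\<forall>q \<in> a_states A. \<forall>t \<in> m_states M.
        rch q t \<longrightarrow>
        pbf_eval (\<lambda>(d, q'). rch q' (m_trans M t d) \<and>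
                             rank_cmp A q q' (\<rho> q t) (\<rho> q' (m_trans M t d)))
                 (a_delta A q (m_out M t)))"

end

(* The ranking constraint describes a run of A on the computation tree of M that depends only on
   the product position (q, t) of a node.

   Rankings give accepting runs: take as children of a node exactly the atoms (d, q') of
   delta(q, out t) whose successor position is marked by rch and passes the rank comparison.
   Along a branch the hesitant blocks can only descend in their partial order, so the branch
   eventually stays in one block.  There the ranks never increase, and they strictly decrease at
   every non-accepting step of an N-block and at every accepting step of a U-block, which can
   happen only finitely often.

   Accepting runs give rankings: an accepting run visits only finitely many positions, and for
   each block the ranks are the stages of an attractor iteration on these positions (a least
   fixpoint for N-blocks, nested greatest fixpoints for U-blocks).  A position of the block that
   the iteration never reaches would let us follow the run inside the block along a branch that
   violates the acceptance condition.

   The theorem follows because M satisfies Phi iff A accepts the computation tree of M. *)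

theory Submission
  imports Defs "HOL-Library.Infinite_Set" "HOL-Library.Sublist"
begin

lemma pbf_eval_mono: "pbf_eval v f \<Longrightarrow> (\<And>a. v a \<Longrightarrow> w a) \<Longrightarrow> pbf_eval w f"
  by (induction f) auto

lemma pbf_eval_restrict: "pbf_atoms f \<subseteq> S \<Longrightarrow> pbf_eval (\<lambda>a. a \<in> S \<and> v a) f = pbf_eval v f"
  by (induction f) auto

lemma eventually_nonincreasing_stationary:
  fixes f :: "nat \<Rightarrow> nat"
  assumes "\<forall>\<^sub>\<infinity>m. f (Suc m) \<le> f m"
  shows "\<forall>\<^sub>\<infinity>m. f (Suc m) = f m"
proof -
  obtain K where K: "\<And>m. K \<le> m \<Longrightarrow> f (Suc m) \<le> f m"
    using assms by (auto simp: MOST_nat_le)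
  obtain m0 where m0: "K \<le> m0" "\<And>m. K \<le> m \<Longrightarrow> f m0 \<le> f m"
    using ex_has_least_nat[of "\<lambda>m. K \<le> m" K f] by auto
  have "f m \<le> f m0" if "m0 \<le> m" for m
    using that by (induction m rule: dec_induct) (use K m0(1) order_trans in auto)
  then have "f m = f m0" if "m0 \<le> m" for m
    using that m0 by (meson antisym order_trans)
  then show ?thesis
    unfolding MOST_nat_le by (metis le_Suc_eq)
qed

lemma eventually_stationary_const:
  assumes "\<forall>\<^sub>\<infinity>m. f (Suc m) = f m"
  shows "\<exists>c. \<forall>\<^sub>\<infinity>m. f m = c"
proof -
  obtain K where K: "\<And>m. K \<le> m \<Longrightarrow> f (Suc m) = f m"
    using assms by (auto simp: MOST_nat_le)
  have "f m = f K" if "K \<le> m" for m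
    using that by (induction m rule: dec_induct) (use K in auto)
  then show ?thesis
    unfolding MOST_nat_le by blast
qed

lemma descending_chain_stabilises:
  assumes "finite X" and "partial_order_on X r"
    and "\<And>m. b m \<in> X" and "\<And>m. (b (Suc m), b m) \<in> r"
  shows "\<exists>c. \<forall>\<^sub>\<infinity>m. b m = c"
proof -
  define below where "below m = card {x \<in> X. (x, b m) \<in> r}" for m
  have "trans r" "antisym r" "refl_on X r"
    using assms(2) by (auto simp: partial_order_on_def preorder_on_def)
  then have down: "{x \<in> X. (x, b (Suc m)) \<in> r} \<subseteq> {x \<in> X. (x, b m) \<in> r}"
    and strict: "b (Suc m) \<noteq> b m \<Longrightarrow> b m \<notin> {x \<in> X. (x, b (Suc m)) \<in> r}"
    and self: "b m \<in> {x \<in> X. (x, b m) \<in> r}" for m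
    using assms(3,4) unfolding trans_def antisym_def refl_on_def by blast+
  have "below (Suc m) \<le> below m" for m
    unfolding below_def using down assms(1) by (intro card_mono) auto
  then have "\<forall>\<^sub>\<infinity>m. below (Suc m) = below m"
    by (intro eventually_nonincreasing_stationary ALL_MOST) auto
  moreover have "b (Suc m) = b m" if "below (Suc m) = below m" for m
  proof (rule ccontr)
    assume "b (Suc m) \<noteq> b m"
    then have "{x \<in> X. (x, b (Suc m)) \<in> r} \<subset> {x \<in> X. (x, b m) \<in> r}"
      using down strict self by blast
    then have "below (Suc m) < below m"
      unfolding below_def using assms(1) by (intro psubset_card_mono) auto
    then show False using that by simp
  qed
  ultimately show ?thesis
    by (intro eventually_stationary_const) (auto elim: MOST_mono)
qed

lemma funpow_stabilises:
  fixes F :: "'a set \<Rightarrow> 'a set"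
  assumes "mono F" and "finite S" and "\<And>X. F X \<subseteq> S"
  obtains N where "F ((F ^^ N) {}) = (F ^^ N) {}"
proof -
  define Z where "Z n = (F ^^ n) {}" for n
  have step: "Z n \<subseteq> Z (Suc n)" for n
  proof (induction n)
    case (Suc n)
    then show ?case using monoD[OF assms(1) Suc] by (simp add: Z_def)
  qed (simp add: Z_def)
  have "mono Z"
    using step by (simp add: mono_iff_le_Suc)
  moreover have "Z n \<subseteq> S" for n
    using assms(3) by (cases n) (auto simp: Z_def)
  then have "range Z \<subseteq> Pow S"
    by blast
  then have "finite (range Z)"
    using assms(2) by (simp add: finite_subset)
  moreover have "Z n = Z (Suc n) \<Longrightarrow> Z (Suc n) = Z (Suc (Suc n))" for n
    by (simp add: Z_def)
  ultimately obtain N where "\<forall>n\<ge>N. Z N = Z n"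
    using finite_mono_remains_stable_implies_strict_prefix[of Z] by blast
  then have "Z (Suc N) = Z N"
    by (metis le_add2 plus_1_eq_Suc)
  then show ?thesis
    using that by (simp add: Z_def)
qed

section \<open>Infinite branches through sets of words\<close>

lemma prefix_nth: "prefix xs ys \<Longrightarrow> i < length xs \<Longrightarrow> xs ! i = ys ! i"
  by (auto simp: prefix_def nth_append)

lemma prefix_chain_limit:
  assumes chain: "\<And>n. prefix (ys n) (ys (Suc n))" and long: "\<And>n. n \<le> length (ys n)"
  obtains \<beta> where "\<And>n k. k \<le> length (ys n) \<Longrightarrow> map \<beta> [0..<k] = take k (ys n)"
proof
  have mono: "prefix (ys m) (ys n)" if "m \<le> n" for m n
    using that by (induction n rule: dec_induct) (use chain prefix_order.trans in blast)+
  fix n k assume k: "k \<le> length (ys n)"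
  have "ys (Suc i) ! i = ys n ! i" if "i < length (ys n)" for i
  proof (cases "Suc i \<le> n")
    case True
    moreover have "i < length (ys (Suc i))"
      using long[of "Suc i"] by simp
    ultimately show ?thesis
      using prefix_nth mono by blast
  next
    case False
    then have "prefix (ys n) (ys (Suc i))"
      by (intro mono) simp
    then show ?thesis
      using prefix_nth that by metis
  qed
  then have "map (\<lambda>i. ys (Suc i) ! i) [0..<length (ys n)] = ys n"
    by (intro nth_equalityI) simp_all
  then have "take k (ys n) = map (\<lambda>i. ys (Suc i) ! i) (take k [0..<length (ys n)])"
    by (metis take_map)
  then show "map (\<lambda>i. ys (Suc i) ! i) [0..<k] = take k (ys n)"
    using k by (simp add: take_upt)
qed

definition stays_in :: "'x list set \<Rightarrow> 'x list \<Rightarrow> 'x list \<Rightarrow> bool" where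
  "stays_in S y z \<longleftrightarrow> prefix y z \<and> (\<forall>u. prefix y u \<longrightarrow> prefix u z \<longrightarrow> u \<in> S)"

lemma stays_in_refl: "y \<in> S \<Longrightarrow> stays_in S y y"
  by (auto simp: stays_in_def dest: prefix_order.antisym)

lemma stays_in_snoc: "stays_in S y z \<Longrightarrow> z @ [a] \<in> S \<Longrightarrow> stays_in S y (z @ [a])"
  by (auto simp: stays_in_def)

lemma stays_in_trans: "stays_in S x y \<Longrightarrow> stays_in S y z \<Longrightarrow> stays_in S x z"
  unfolding stays_in_def by (meson prefix_order.trans prefix_same_cases)

lemma stays_in_end: "stays_in S y z \<Longrightarrow> z \<in> S"
  by (simp add: stays_in_def)

lemma stays_in_strict_extension:
  assumes "y \<in> S"
    and child: "\<And>y. y \<in> S \<Longrightarrow> \<exists>a. y @ [a] \<in> S"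
    and reach: "\<And>y. y \<in> S \<Longrightarrow> \<exists>z. stays_in S y z \<and> Ac z"
  shows "\<exists>z. stays_in S y z \<and> length y < length z \<and> Ac z"
proof -
  obtain a where a: "y @ [a] \<in> S"
    using child[OF assms(1)] by blast
  then obtain z where z: "stays_in S (y @ [a]) z" "Ac z"
    using reach by blast
  have "stays_in S y (y @ [a])"
    using stays_in_snoc[OF stays_in_refl[OF assms(1)] a] .
  then have "stays_in S y z"
    using z(1) by (rule stays_in_trans)
  moreover have "length y < length z"
    using z(1) prefix_length_le by (fastforce simp: stays_in_def)
  ultimately show ?thesis
    using z(2) by blast
qed

lemma infinite_branch:
  assumes "x \<in> S"
    and child: "\<And>y. y \<in> S \<Longrightarrow> \<exists>a. y @ [a] \<in> S"
    and reach: "\<And>y. y \<in> S \<Longrightarrow> \<exists>z. stays_in S y z \<and> Ac z"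
  obtains \<beta> where "map \<beta> [0..<length x] = x" and "\<And>k. length x \<le> k \<Longrightarrow> map \<beta> [0..<k] \<in> S"
    and "\<exists>\<^sub>\<infinity>k. Ac (map \<beta> [0..<k])"
proof -
  have "\<exists>ys. \<forall>n. (stays_in S x (ys n) \<and> length x + n \<le> length (ys n)) \<and>
                (stays_in S (ys n) (ys (Suc n)) \<and> Ac (ys (Suc n)))"
  proof (rule dependent_nat_choice)
    show "\<exists>y. stays_in S x y \<and> length x + 0 \<le> length y"
      using stays_in_refl[OF \<open>x \<in> S\<close>] by auto
  next
    fix y n assume "stays_in S x y \<and> length x + n \<le> length y"
    then show "\<exists>z. (stays_in S x z \<and> length x + Suc n \<le> length z) \<and> stays_in S y z \<and> Ac z"
      using stays_in_strict_extension[OF stays_in_end child reach] stays_in_trans by fastforce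
  qed
  then obtain ys where ys: "\<And>n. stays_in S x (ys n) \<and> length x + n \<le> length (ys n)"
    and step: "\<And>n. stays_in S (ys n) (ys (Suc n)) \<and> Ac (ys (Suc n))"
    by blast
  have "prefix (ys n) (ys (Suc n))" and "n \<le> length (ys n)" for n
    using step[of n] ys[of n] by (auto simp: stays_in_def)
  then obtain \<beta> where limit: "\<And>n k. k \<le> length (ys n) \<Longrightarrow> map \<beta> [0..<k] = take k (ys n)"
    by (rule prefix_chain_limit) (rule that)
  show thesis
  proof
    show "map \<beta> [0..<length x] = x"
      using limit[of "length x" 0] ys[of 0] by (auto simp: stays_in_def prefix_def)
  next
    fix k assume "length x \<le> k"
    moreover have "k \<le> length (ys k)"
      using ys[of k] by simp
    ultimately show "map \<beta> [0..<k] \<in> S"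
      using limit ys[of k] unfolding stays_in_def
      by (metis prefix_def prefix_length_prefix take_all take_is_prefix take_append order.refl)
  next
    have "\<exists>k\<ge>K. Ac (map \<beta> [0..<k])" for K
    proof -
      have "K \<le> length (ys (Suc K))"
        using ys[of "Suc K"] by simp
      then show ?thesis
        using limit[of "length (ys (Suc K))" "Suc K"] step[of K] by (metis order.refl take_all)
    qed
    then show "\<exists>\<^sub>\<infinity>k. Ac (map \<beta> [0..<k])"
      unfolding INFM_nat_le by blast
  qed
qed

inductive_set admissible_words :: "('x list \<Rightarrow> 'x \<Rightarrow> bool) \<Rightarrow> 'x list set" for ok where
  Nil: "[] \<in> admissible_words ok"
| snoc: "y \<in> admissible_words ok \<Longrightarrow> ok y a \<Longrightarrow> y @ [a] \<in> admissible_words ok"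

lemma snoc_admissible_words_iff: "y @ [a] \<in> admissible_words ok \<longleftrightarrow> y \<in> admissible_words ok \<and> ok y a"
  by (auto elim: admissible_words.cases intro: admissible_words.snoc)

section \<open>Ranking the positions of a run-tree\<close>

(* Ranks are attached to positions rather than to nodes of the run-tree; finiteness of the set
   of visited positions is what makes the attractor iterations below stabilise. *)

locale positional_tree =
  fixes R :: "'x list set" and pos :: "'x list \<Rightarrow> 'p"
    and succ :: "'p \<Rightarrow> 'x \<Rightarrow> 'p" and obl :: "'p \<Rightarrow> 'x pbf"
  assumes prefix_closed: "\<And>y a. y @ [a] \<in> R \<Longrightarrow> y \<in> R"
    and pos_snoc: "\<And>y a. pos (y @ [a]) = succ (pos y) a"
    and children_sat: "\<And>y. y \<in> R \<Longrightarrow> pbf_eval (\<lambda>a. y @ [a] \<in> R) (obl (pos y))"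
    and finite_positions: "finite (pos ` R)"
begin

definition next_sat :: "'p \<Rightarrow> ('p \<Rightarrow> bool) \<Rightarrow> bool" where
  "next_sat p P \<longleftrightarrow> pbf_eval (\<lambda>a. succ p a \<in> pos ` R \<and> P (succ p a)) (obl p)"

definition is_branch :: "(nat \<Rightarrow> 'x) \<Rightarrow> bool" where
  "is_branch \<beta> \<longleftrightarrow> (\<forall>k. map \<beta> [0..<k] \<in> R)"

lemma next_sat_mono:
  "next_sat p P \<Longrightarrow> (\<And>p'. p' \<in> pos ` R \<Longrightarrow> P p' \<Longrightarrow> Q p') \<Longrightarrow> next_sat p Q"
  unfolding next_sat_def by (erule pbf_eval_mono) blast

lemma next_sat_if_children:
  assumes "y \<in> R" and "\<And>a. y @ [a] \<in> R \<Longrightarrow> P (pos (y @ [a]))"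
  shows "next_sat (pos y) P"
  unfolding next_sat_def using children_sat[OF assms(1)]
  by (rule pbf_eval_mono) (metis assms(2) pos_snoc image_eqI)

lemma next_sat_True:
  assumes "p \<in> pos ` R"
  shows "next_sat p (\<lambda>_. True)"
proof -
  obtain y where "y \<in> R" "p = pos y"
    using assms by blast
  then show ?thesis
    using next_sat_if_children[of y "\<lambda>_. True"] by simp
qed

lemma prefix_in_tree: "y \<in> R \<Longrightarrow> prefix u y \<Longrightarrow> u \<in> R"
  by (induction y rule: rev_induct) (auto dest: prefix_closed)

lemma branch_within:
  assumes "x \<in> S" and "S \<subseteq> R"
    and "\<And>y. y \<in> S \<Longrightarrow> \<exists>a. y @ [a] \<in> S"
    and "\<And>y. y \<in> S \<Longrightarrow> \<exists>z. stays_in S y z \<and> Ac z"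
  obtains \<beta> where "is_branch \<beta>" and "\<forall>\<^sub>\<infinity>k. map \<beta> [0..<k] \<in> S"
    and "\<exists>\<^sub>\<infinity>k. Ac (map \<beta> [0..<k])"
proof -
  obtain \<beta> where init: "map \<beta> [0..<length x] = x"
    and inS: "\<And>k. length x \<le> k \<Longrightarrow> map \<beta> [0..<k] \<in> S"
    and "\<exists>\<^sub>\<infinity>k. Ac (map \<beta> [0..<k])"
    using infinite_branch[of x S Ac] assms by blast
  moreover have "map \<beta> [0..<k] \<in> R" for k
  proof (cases "length x \<le> k")
    case False
    have "take k x = map \<beta> (take k [0..<length x])"
      using init by (metis take_map)
    then have "prefix (map \<beta> [0..<k]) x"
      using False by (simp add: take_upt) (metis take_is_prefix)
    then show ?thesis
      using assms(1,2) prefix_in_tree by blast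
  qed (use inS assms(2) in blast)
  moreover have "\<forall>\<^sub>\<infinity>k. map \<beta> [0..<k] \<in> S"
    using inS by (auto simp: MOST_nat_le)
  ultimately show thesis
    using that by (auto simp: is_branch_def)
qed

definition escaping :: "'p set \<Rightarrow> 'p set \<Rightarrow> 'x list set" where
  "escaping B W = {y \<in> R. pos y \<in> B \<and> pos y \<notin> W}"

lemma escaping_subset: "escaping B W \<subseteq> R"
  by (auto simp: escaping_def)

lemma escaping_witness:
  assumes "p \<in> pos ` R" "p \<in> B" "p \<notin> W"
  obtains x where "x \<in> escaping B W"
proof -
  obtain x where "x \<in> R" "p = pos x"
    using assms(1) by blast
  then show thesis
    using assms(2,3) by (intro that[of x]) (simp add: escaping_def)
qed

(* The n-th iterate of buchi_step B Acc from the empty set collects the positions from which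
   the run reaches Acc or leaves B within n steps; the least such n is the Buchi rank. *)

definition buchi_step :: "'p set \<Rightarrow> 'p set \<Rightarrow> 'p set \<Rightarrow> 'p set" where
  "buchi_step B Acc X = {p \<in> pos ` R. p \<in> Acc \<or> next_sat p (\<lambda>p'. p' \<in> B \<longrightarrow> p' \<in> X)}"

lemma mono_buchi_step: "mono (buchi_step B Acc)"
proof (rule monoI)
  fix X Y :: "'p set"
  assume "X \<subseteq> Y"
  then have "next_sat p (\<lambda>p'. p' \<in> B \<longrightarrow> p' \<in> X) \<Longrightarrow> next_sat p (\<lambda>p'. p' \<in> B \<longrightarrow> p' \<in> Y)" for p
    by (elim next_sat_mono) blast
  then show "buchi_step B Acc X \<subseteq> buchi_step B Acc Y"
    unfolding buchi_step_def by blast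
qed

lemma buchi_escaping_child:
  assumes fixed: "buchi_step B Acc Z = Z" and y: "y \<in> escaping B Z"
  shows "\<exists>a. y @ [a] \<in> escaping B Z"
proof (rule ccontr)
  assume no_child: "\<nexists>a. y @ [a] \<in> escaping B Z"
  have "y \<in> R"
    using y by (simp add: escaping_def)
  then have "next_sat (pos y) (\<lambda>p'. p' \<in> B \<longrightarrow> p' \<in> Z)"
    by (rule next_sat_if_children) (use no_child in \<open>auto simp: escaping_def\<close>)
  then have "pos y \<in> buchi_step B Acc Z"
    using \<open>y \<in> R\<close> by (auto simp: buchi_step_def)
  then show False
    using y fixed by (simp add: escaping_def)
qed

lemma buchi_escape:
  assumes fixed: "buchi_step B Acc Z = Z" and p: "p \<in> pos ` R" "p \<in> B" "p \<notin> Z"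
  obtains \<beta> where "is_branch \<beta>" and "\<forall>\<^sub>\<infinity>k. pos (map \<beta> [0..<k]) \<in> B - Acc"
proof -
  obtain x where x: "x \<in> escaping B Z"
    using p by (rule escaping_witness)
  have "\<exists>z. stays_in (escaping B Z) y z \<and> True" if "y \<in> escaping B Z" for y
    using stays_in_refl[OF that] by blast
  then obtain \<beta> where branch: "is_branch \<beta>" and escaping: "\<forall>\<^sub>\<infinity>k. map \<beta> [0..<k] \<in> escaping B Z"
    using branch_within[where Ac = "\<lambda>_. True", OF x escaping_subset buchi_escaping_child[OF fixed]]
    by metis
  have escaped: "pos y \<in> B - Acc" if "y \<in> escaping B Z" for y
  proof -
    have "pos y \<notin> buchi_step B Acc Z"
      using that fixed by (simp add: escaping_def)
    then show ?thesis
      using that by (auto simp: escaping_def buchi_step_def)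
  qed
  have "\<forall>\<^sub>\<infinity>k. pos (map \<beta> [0..<k]) \<in> B - Acc"
    using escaping by (rule MOST_mono) (rule escaped)
  with branch show thesis
    by (rule that)
qed

lemma buchi_ranking:
  assumes accepting: "\<And>\<beta>. is_branch \<beta> \<Longrightarrow> \<forall>\<^sub>\<infinity>k. pos (map \<beta> [0..<k]) \<in> B \<Longrightarrow>
                          \<exists>\<^sub>\<infinity>k. pos (map \<beta> [0..<k]) \<in> Acc"
  obtains \<rho> :: "'p \<Rightarrow> nat"
  where "\<And>p. p \<in> pos ` R \<Longrightarrow> p \<in> B \<Longrightarrow> p \<notin> Acc \<Longrightarrow> next_sat p (\<lambda>p'. p' \<in> B \<longrightarrow> \<rho> p' < \<rho> p)"
proof -
  define Z where "Z n = (buchi_step B Acc ^^ n) {}" for n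
  have "buchi_step B Acc X \<subseteq> pos ` R" for X
    by (auto simp: buchi_step_def)
  with mono_buchi_step obtain N where fixed: "buchi_step B Acc (Z N) = Z N"
    unfolding Z_def using finite_positions by (metis funpow_stabilises)
  have covered: "p \<in> Z N" if p: "p \<in> pos ` R" "p \<in> B" for p
  proof (rule ccontr)
    assume "p \<notin> Z N"
    with fixed p obtain \<beta> where branch: "is_branch \<beta>"
      and stay: "\<forall>\<^sub>\<infinity>k. pos (map \<beta> [0..<k]) \<in> B - Acc"
      by (rule buchi_escape)
    have "\<forall>\<^sub>\<infinity>k. pos (map \<beta> [0..<k]) \<in> B"
      using stay by (rule MOST_mono) simp
    then have "\<exists>\<^sub>\<infinity>k. pos (map \<beta> [0..<k]) \<in> Acc"
      by (rule accepting[OF branch])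
    moreover have "\<not> (\<exists>\<^sub>\<infinity>k. pos (map \<beta> [0..<k]) \<in> Acc)"
      using stay by (simp add: MOST_conj_distrib)
    ultimately show False
      by contradiction
  qed
  define \<rho> where "\<rho> p = (LEAST n. p \<in> Z n)" for p
  show thesis
  proof (rule that)
    fix p assume p: "p \<in> pos ` R" "p \<in> B" "p \<notin> Acc"
    have "p \<in> Z (\<rho> p)"
      unfolding \<rho>_def using covered[OF p(1,2)] by (rule LeastI)
    then obtain n where n: "\<rho> p = Suc n" "p \<in> buchi_step B Acc (Z n)"
      by (cases "\<rho> p") (auto simp: Z_def)
    then have "next_sat p (\<lambda>p'. p' \<in> B \<longrightarrow> p' \<in> Z n)"
      using p(3) by (simp add: buchi_step_def)
    then show "next_sat p (\<lambda>p'. p' \<in> B \<longrightarrow> \<rho> p' < \<rho> p)"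
    proof (rule next_sat_mono)
      fix p' assume "p' \<in> B \<longrightarrow> p' \<in> Z n"
      moreover have "p' \<in> Z n \<Longrightarrow> \<rho> p' \<le> n"
        unfolding \<rho>_def by (rule Least_le)
      ultimately show "p' \<in> B \<longrightarrow> \<rho> p' < \<rho> p"
        using n(1) by auto
    qed
  qed
qed

(* With H Y = gfp (cobuchi_step B Acc Y), the n-th iterate of H from the empty set collects the
   positions from which the run visits Acc at most n times as long as it stays in B; the least
   such n is the co-Buchi rank. *)
definition cobuchi_step :: "'p set \<Rightarrow> 'p set \<Rightarrow> 'p set \<Rightarrow> 'p set \<Rightarrow> 'p set" where
  "cobuchi_step B Acc Y X =
     {p \<in> pos ` R. next_sat p (\<lambda>p'. p' \<in> B \<longrightarrow> p' \<in> X \<and> (p \<in> Acc \<longrightarrow> p' \<in> Y))}"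

lemma cobuchi_step_mono:
  assumes "Y \<subseteq> Y'" and "X \<subseteq> X'"
  shows "cobuchi_step B Acc Y X \<subseteq> cobuchi_step B Acc Y' X'"
proof -
  have "next_sat p (\<lambda>p'. p' \<in> B \<longrightarrow> p' \<in> X \<and> (p \<in> Acc \<longrightarrow> p' \<in> Y)) \<Longrightarrow>
        next_sat p (\<lambda>p'. p' \<in> B \<longrightarrow> p' \<in> X' \<and> (p \<in> Acc \<longrightarrow> p' \<in> Y'))" for p
    by (elim next_sat_mono) (use assms in blast)
  then show ?thesis
    unfolding cobuchi_step_def by blast
qed

lemma cobuchi_gfp_unfold: "gfp (cobuchi_step B Acc Y) = cobuchi_step B Acc Y (gfp (cobuchi_step B Acc Y))"
  by (rule gfp_unfold) (simp add: cobuchi_step_mono monoI)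

lemma cobuchi_escaping_child:
  assumes fixed: "gfp (cobuchi_step B Acc W) = W" and y: "y \<in> escaping B W"
  shows "\<exists>a. y @ [a] \<in> escaping B W"
proof (rule ccontr)
  assume no_child: "\<nexists>a. y @ [a] \<in> escaping B W"
  have "y \<in> R"
    using y by (simp add: escaping_def)
  then have "next_sat (pos y) (\<lambda>p'. p' \<in> B \<longrightarrow> p' \<in> W \<and> (pos y \<in> Acc \<longrightarrow> p' \<in> W))"
    by (rule next_sat_if_children) (use no_child in \<open>auto simp: escaping_def\<close>)
  then have "pos y \<in> cobuchi_step B Acc W W"
    using \<open>y \<in> R\<close> by (auto simp: cobuchi_step_def)
  then show False
    using y cobuchi_gfp_unfold[of B Acc W] fixed by (simp add: escaping_def)
qed

lemma cobuchi_step_escaping: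
  assumes z: "stays_in (escaping B W) y z" and "pos z \<notin> Acc"
  shows "pos z \<in> cobuchi_step B Acc W (W \<union> pos ` {z. stays_in (escaping B W) y z})"
proof -
  let ?X = "W \<union> pos ` {z. stays_in (escaping B W) y z}"
  have "z \<in> R"
    using stays_in_end[OF z] by (simp add: escaping_def)
  then have "next_sat (pos z) (\<lambda>p'. p' \<in> B \<longrightarrow> p' \<in> ?X \<and> (pos z \<in> Acc \<longrightarrow> p' \<in> W))"
  proof (rule next_sat_if_children)
    fix a assume za: "z @ [a] \<in> R"
    have "pos (z @ [a]) \<in> ?X" if "pos (z @ [a]) \<in> B"
    proof (cases "pos (z @ [a]) \<in> W")
      case False
      then have "z @ [a] \<in> escaping B W"
        using za that by (simp add: escaping_def)
      then show ?thesis
        using stays_in_snoc[OF z] by blast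
    qed simp
    then show "pos (z @ [a]) \<in> B \<longrightarrow> pos (z @ [a]) \<in> ?X \<and> (pos z \<in> Acc \<longrightarrow> pos (z @ [a]) \<in> W)"
      using \<open>pos z \<notin> Acc\<close> by blast
  qed
  then show ?thesis
    using \<open>z \<in> R\<close> by (simp add: cobuchi_step_def)
qed

lemma cobuchi_escaping_reach:
  assumes fixed: "gfp (cobuchi_step B Acc W) = W" and y: "y \<in> escaping B W"
  shows "\<exists>z. stays_in (escaping B W) y z \<and> pos z \<in> Acc"
proof (rule ccontr)
  assume no_acc: "\<not> ?thesis"
  define X where "X = W \<union> pos ` {z. stays_in (escaping B W) y z}"
  have "W = cobuchi_step B Acc W W"
    using fixed cobuchi_gfp_unfold[of B Acc W] by simp
  also have "\<dots> \<subseteq> cobuchi_step B Acc W X"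
    by (rule cobuchi_step_mono) (auto simp: X_def)
  finally have "W \<subseteq> cobuchi_step B Acc W X" .
  moreover have "pos z \<in> cobuchi_step B Acc W X" if "stays_in (escaping B W) y z" for z
  proof -
    have "pos z \<notin> Acc"
      using no_acc that by blast
    then show ?thesis
      unfolding X_def by (rule cobuchi_step_escaping[OF that])
  qed
  ultimately have "X \<subseteq> cobuchi_step B Acc W X"
    unfolding X_def by blast
  then have "X \<subseteq> W"
    using fixed gfp_upperbound[of X "cobuchi_step B Acc W"] by simp
  moreover have "pos y \<in> X"
    using stays_in_refl[OF y] by (auto simp: X_def)
  ultimately show False
    using y by (auto simp: escaping_def)
qed

lemma cobuchi_escape:
  assumes fixed: "gfp (cobuchi_step B Acc W) = W" and p: "p \<in> pos ` R" "p \<in> B" "p \<notin> W"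
  obtains \<beta> where "is_branch \<beta>" and "\<forall>\<^sub>\<infinity>k. pos (map \<beta> [0..<k]) \<in> B"
    and "\<exists>\<^sub>\<infinity>k. pos (map \<beta> [0..<k]) \<in> Acc"
proof -
  obtain x where x: "x \<in> escaping B W"
    using p by (rule escaping_witness)
  obtain \<beta> where branch: "is_branch \<beta>" and escaping: "\<forall>\<^sub>\<infinity>k. map \<beta> [0..<k] \<in> escaping B W"
    and acc: "\<exists>\<^sub>\<infinity>k. pos (map \<beta> [0..<k]) \<in> Acc"
    using branch_within[where Ac = "\<lambda>z. pos z \<in> Acc", OF x escaping_subset
        cobuchi_escaping_child[OF fixed] cobuchi_escaping_reach[OF fixed]]
    by metis
  have "\<forall>\<^sub>\<infinity>k. pos (map \<beta> [0..<k]) \<in> B"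
    using escaping by (rule MOST_mono) (simp add: escaping_def)
  then show thesis
    using branch acc by (intro that)
qed

lemma cobuchi_ranking:
  assumes accepting: "\<And>\<beta>. is_branch \<beta> \<Longrightarrow> \<forall>\<^sub>\<infinity>k. pos (map \<beta> [0..<k]) \<in> B \<Longrightarrow>
                          \<forall>\<^sub>\<infinity>k. pos (map \<beta> [0..<k]) \<notin> Acc"
  obtains \<rho> :: "'p \<Rightarrow> nat"
  where "\<And>p. p \<in> pos ` R \<Longrightarrow> p \<in> B \<Longrightarrow>
           next_sat p (\<lambda>p'. p' \<in> B \<longrightarrow> (if p \<in> Acc then \<rho> p' < \<rho> p else \<rho> p' \<le> \<rho> p))"
proof -
  define H where "H Y = gfp (cobuchi_step B Acc Y)" for Y
  define Z where "Z n = (H ^^ n) {}" for n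
  have "mono H"
    unfolding H_def by (intro monoI gfp_mono) (simp add: cobuchi_step_mono)
  moreover have "H Y \<subseteq> pos ` R" for Y
    using cobuchi_gfp_unfold[of B Acc Y] by (auto simp: H_def cobuchi_step_def)
  ultimately obtain N where fixed: "H (Z N) = Z N"
    unfolding Z_def using finite_positions by (metis funpow_stabilises)
  have covered: "p \<in> Z N" if p: "p \<in> pos ` R" "p \<in> B" for p
  proof (rule ccontr)
    assume "p \<notin> Z N"
    moreover have "gfp (cobuchi_step B Acc (Z N)) = Z N"
      using fixed by (simp add: H_def)
    ultimately obtain \<beta> where branch: "is_branch \<beta>" and stay: "\<forall>\<^sub>\<infinity>k. pos (map \<beta> [0..<k]) \<in> B"
      and acc: "\<exists>\<^sub>\<infinity>k. pos (map \<beta> [0..<k]) \<in> Acc"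
      using p by (elim cobuchi_escape)
    have "\<not> (\<exists>\<^sub>\<infinity>k. pos (map \<beta> [0..<k]) \<in> Acc)"
      using accepting[OF branch stay] by simp
    then show False
      using acc by contradiction
  qed
  define \<rho> where "\<rho> p = (LEAST n. p \<in> Z n)" for p
  have rank_le: "p' \<in> Z m \<Longrightarrow> \<rho> p' \<le> m" for p' m
    unfolding \<rho>_def by (rule Least_le)
  show thesis
  proof (rule that)
    fix p assume p: "p \<in> pos ` R" "p \<in> B"
    have "p \<in> Z (\<rho> p)"
      unfolding \<rho>_def using covered[OF p] by (rule LeastI)
    then obtain n where n: "\<rho> p = Suc n" "p \<in> H (Z n)"
      by (cases "\<rho> p") (auto simp: Z_def)
    then have "p \<in> cobuchi_step B Acc (Z n) (Z (Suc n))"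
      using cobuchi_gfp_unfold[of B Acc "Z n"] by (simp add: H_def Z_def)
    then have "next_sat p (\<lambda>p'. p' \<in> B \<longrightarrow> p' \<in> Z (Suc n) \<and> (p \<in> Acc \<longrightarrow> p' \<in> Z n))"
      by (simp add: cobuchi_step_def)
    then show "next_sat p (\<lambda>p'. p' \<in> B \<longrightarrow> (if p \<in> Acc then \<rho> p' < \<rho> p else \<rho> p' \<le> \<rho> p))"
      by (rule next_sat_mono) (use n(1) rank_le in fastforce)
  qed
qed

end

section \<open>Hesitant automata\<close>

abbreviation a_blocks :: "('a, 'q) aht \<Rightarrow> 'q set set" where
  "a_blocks A \<equiv> a_Nblocks A \<union> a_Ublocks A"

definition block_of :: "('a, 'q) aht \<Rightarrow> 'q \<Rightarrow> 'q set" where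
  "block_of A q = (THE B. B \<in> a_blocks A \<and> q \<in> B)"

lemma block_unique:
  assumes "hesitant_ata Ins Outs A" "B \<in> a_blocks A" "B' \<in> a_blocks A" "q \<in> B" "q \<in> B'"
  shows "B = B'"
proof -
  have "disjoint (a_blocks A)"
    using assms(1) by (simp add: hesitant_ata_def partition_on_def)
  then show ?thesis
    using assms(2-5) unfolding disjoint_def by blast
qed

lemma block_of_eq:
  assumes "hesitant_ata Ins Outs A" "B \<in> a_blocks A" "q \<in> B"
  shows "block_of A q = B"
  unfolding block_of_def
  by (rule the_equality) (use assms block_unique[OF assms(1)] in blast)+

lemma block_of:
  assumes "hesitant_ata Ins Outs A" "q \<in> a_states A"
  shows "block_of A q \<in> a_blocks A" and "q \<in> block_of A q"
proof -
  have "a_states A = \<Union>(a_blocks A)"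
    using assms(1) by (simp add: hesitant_ata_def partition_on_def)
  then obtain B where "B \<in> a_blocks A" "q \<in> B"
    using assms(2) by blast
  then show "block_of A q \<in> a_blocks A" "q \<in> block_of A q"
    using block_of_eq[OF assms(1)] by auto
qed

lemma rank_cmp_other_block:
  assumes "hesitant_ata Ins Outs A" "B \<in> a_blocks A" "q \<in> B" "q' \<notin> B"
  shows "rank_cmp A q q' r r'"
proof -
  have "\<not> (\<exists>B' \<in> a_blocks A. q \<in> B' \<and> q' \<in> B')"
    using assms block_unique[OF assms(1)] by blast
  then show ?thesis
    by (auto simp: rank_cmp_def)
qed

lemma rank_cmp_Nblock:
  assumes "hesitant_ata Ins Outs A" "B \<in> a_Nblocks A" "q \<in> B"
  shows "rank_cmp A q q' r r' \<longleftrightarrow> (q' \<in> B \<longrightarrow> q \<in> a_acc A \<or> r' < r)"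
proof (cases "q' \<in> B")
  case True
  then show ?thesis
    using assms by (auto simp: rank_cmp_def)
next
  case False
  then show ?thesis
    using rank_cmp_other_block[OF assms(1) UnI1[OF assms(2)] assms(3) False] by simp
qed

lemma rank_cmp_Ublock:
  assumes "hesitant_ata Ins Outs A" "B \<in> a_Ublocks A" "q \<in> B"
  shows "rank_cmp A q q' r r' \<longleftrightarrow> (q' \<in> B \<longrightarrow> (if q \<in> a_acc A then r' < r else r' \<le> r))"
proof (cases "q' \<in> B")
  case True
  have "a_Nblocks A \<inter> a_Ublocks A = {}"
    using assms(1) by (simp add: hesitant_ata_def)
  then have "\<not> (\<exists>B' \<in> a_Nblocks A. q \<in> B' \<and> q' \<in> B')"
    using assms True block_unique[OF assms(1)] by blast
  then show ?thesis
    using assms(2,3) True by (auto simp: rank_cmp_def)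
next
  case False
  then show ?thesis
    using rank_cmp_other_block[OF assms(1) UnI2[OF assms(2)] assms(3) False] by simp
qed

lemma successor_block:
  assumes h: "hesitant_ata Ins Outs A" and "B \<in> a_blocks A" "q \<in> B"
    and "a \<subseteq> Outs" and "(d, q') \<in> pbf_atoms (a_delta A q a)"
  shows "(block_of A q', B) \<in> a_order A"
proof (cases "q' \<in> B")
  case True
  have "refl_on (a_blocks A) (a_order A)"
    using h by (simp add: hesitant_ata_def partial_order_on_def preorder_on_def)
  then show ?thesis
    using True assms(2) block_of_eq[OF h] by (simp add: refl_on_def)
next
  case False
  have "\<forall>B \<in> a_blocks A. \<forall>q \<in> B. \<forall>a. a \<subseteq> Outs \<longrightarrow>
          (\<forall>x \<in> pbf_atoms (a_delta A q a). snd x \<notin> B \<longrightarrow>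
             (\<exists>B' \<in> a_blocks A. snd x \<in> B' \<and> (B', B) \<in> a_order A \<and> B' \<noteq> B))"
    using h by (simp add: hesitant_ata_def)
  moreover have "snd (d, q') \<notin> B"
    using False by simp
  ultimately obtain B' where "B' \<in> a_blocks A" "q' \<in> B'" "(B', B) \<in> a_order A"
    using assms(2-5) by (metis snd_conv)
  then show ?thesis
    using block_of_eq[OF h] by simp
qed

lemma hesitant_accepting_iff:
  "hesitant_accepting A \<pi> \<longleftrightarrow>
     (\<exists>B \<in> a_Ublocks A. (\<forall>\<^sub>\<infinity>m. \<pi> m \<in> B) \<and> (\<forall>\<^sub>\<infinity>m. \<pi> m \<notin> a_acc A)) \<or>
     (\<exists>B \<in> a_Nblocks A. (\<forall>\<^sub>\<infinity>m. \<pi> m \<in> B) \<and> (\<exists>\<^sub>\<infinity>m. \<pi> m \<in> a_acc A))"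
proof -
  have "finite {m. \<pi> m \<in> a_acc A} \<longleftrightarrow> (\<forall>\<^sub>\<infinity>m. \<pi> m \<notin> a_acc A)"
    by (simp add: MOST_iff_cofinite)
  then show ?thesis
    unfolding hesitant_accepting_def INFM_iff_infinite by (simp only: MOST_nat_le)
qed

lemma eventual_block_unique:
  fixes \<pi> :: "nat \<Rightarrow> 'q"
  assumes "hesitant_ata Ins Outs A" "B \<in> a_blocks A" "B' \<in> a_blocks A"
    and "\<forall>\<^sub>\<infinity>m. \<pi> m \<in> B" "\<forall>\<^sub>\<infinity>m. \<pi> m \<in> B'"
  shows "B = B'"
proof -
  obtain m where "\<pi> m \<in> B" "\<pi> m \<in> B'"
    using MOST_conjI[OF assms(4,5)] by (auto simp: MOST_nat_le)
  then show ?thesis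
    using block_unique[OF assms(1-3)] by blast
qed

lemma hesitant_accepting_Nblock:
  assumes h: "hesitant_ata Ins Outs A" and B: "B \<in> a_Nblocks A"
    and "hesitant_accepting A \<pi>" and "\<forall>\<^sub>\<infinity>m. \<pi> m \<in> B"
  shows "\<exists>\<^sub>\<infinity>m. \<pi> m \<in> a_acc A"
proof -
  have "a_Nblocks A \<inter> a_Ublocks A = {}"
    using h by (simp add: hesitant_ata_def)
  then show ?thesis
    using assms eventual_block_unique[OF h, of B _ \<pi>] unfolding hesitant_accepting_iff by blast
qed

lemma hesitant_accepting_Ublock:
  assumes h: "hesitant_ata Ins Outs A" and B: "B \<in> a_Ublocks A"
    and "hesitant_accepting A \<pi>" and "\<forall>\<^sub>\<infinity>m. \<pi> m \<in> B"
  shows "\<forall>\<^sub>\<infinity>m. \<pi> m \<notin> a_acc A"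
proof -
  have "a_Nblocks A \<inter> a_Ublocks A = {}"
    using h by (simp add: hesitant_ata_def)
  then show ?thesis
    using assms eventual_block_unique[OF h, of B _ \<pi>] unfolding hesitant_accepting_iff by blast
qed

lemma atom_in_states:
  assumes "hesitant_ata Ins Outs A" "q \<in> a_states A" "a \<subseteq> Outs"
    and "(d, q') \<in> pbf_atoms (a_delta A q a)"
  shows "d \<subseteq> Ins" and "q' \<in> a_states A"
proof -
  have "\<forall>q \<in> a_states A. \<forall>a. a \<subseteq> Outs \<longrightarrow> pbf_atoms (a_delta A q a) \<subseteq> Pow Ins \<times> a_states A"
    using assms(1) by (simp add: hesitant_ata_def)
  then show "d \<subseteq> Ins" "q' \<in> a_states A"
    using assms(2-4) by blast+
qed

lemma eventually_in_block:
  assumes h: "hesitant_ata Ins Outs A" and "\<pi> 0 \<in> a_states A"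
    and step: "\<And>m. \<exists>a d. a \<subseteq> Outs \<and> (d, \<pi> (Suc m)) \<in> pbf_atoms (a_delta A (\<pi> m) a)"
  obtains B where "B \<in> a_blocks A" and "\<forall>\<^sub>\<infinity>m. \<pi> m \<in> B"
proof -
  have states: "\<pi> m \<in> a_states A" for m
  proof (induction m)
    case (Suc m)
    then show ?case
      using step[of m] atom_in_states(2)[OF h] by blast
  qed (fact assms(2))
  define b where "b m = block_of A (\<pi> m)" for m
  have "finite (a_states A)" and "partition_on (a_states A) (a_blocks A)"
    using h by (simp_all add: hesitant_ata_def)
  then have "finite (a_blocks A)"
    by (rule finite_elements)
  moreover have "partial_order_on (a_blocks A) (a_order A)"
    using h by (simp add: hesitant_ata_def)
  moreover have "b m \<in> a_blocks A" and "\<pi> m \<in> b m" for m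
    using block_of[OF h states] by (auto simp: b_def)
  moreover have "(b (Suc m), b m) \<in> a_order A" for m
    using step[of m] successor_block[OF h \<open>b m \<in> a_blocks A\<close> \<open>\<pi> m \<in> b m\<close>] by (auto simp: b_def)
  ultimately obtain B where "\<forall>\<^sub>\<infinity>m. b m = B"
    using descending_chain_stabilises by metis
  moreover from this have "B \<in> a_blocks A"
    using \<open>\<And>m. b m \<in> a_blocks A\<close> by (auto simp: MOST_nat_le)
  moreover have "\<forall>\<^sub>\<infinity>m. \<pi> m \<in> B"
    using \<open>\<forall>\<^sub>\<infinity>m. b m = B\<close> by (rule MOST_mono) (use \<open>\<And>m. \<pi> m \<in> b m\<close> in blast)
  ultimately show thesis
    using that by blast
qed

lemma hesitant_accepting_if_ranked:
  assumes h: "hesitant_ata Ins Outs A" and "\<pi> 0 \<in> a_states A"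
    and step: "\<And>m. \<exists>a d. a \<subseteq> Outs \<and> (d, \<pi> (Suc m)) \<in> pbf_atoms (a_delta A (\<pi> m) a)"
    and ranked: "\<And>m. rank_cmp A (\<pi> m) (\<pi> (Suc m)) (r m) (r (Suc m))"
  shows "hesitant_accepting A \<pi>"
proof -
  obtain B where B: "B \<in> a_blocks A" "\<forall>\<^sub>\<infinity>m. \<pi> m \<in> B"
    using eventually_in_block[OF h assms(2) step] by blast
  then have stay: "\<forall>\<^sub>\<infinity>m. \<pi> m \<in> B \<and> \<pi> (Suc m) \<in> B"
    using MOST_conjI MOST_SucI by blast
  show ?thesis
  proof (cases "B \<in> a_Nblocks A")
    case True
    have "\<exists>\<^sub>\<infinity>m. \<pi> m \<in> a_acc A"
    proof (rule ccontr)
      assume "\<not> (\<exists>\<^sub>\<infinity>m. \<pi> m \<in> a_acc A)"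
      then have "\<forall>\<^sub>\<infinity>m. \<pi> m \<notin> a_acc A"
        by simp
      with stay have descent: "\<forall>\<^sub>\<infinity>m. r (Suc m) < r m"
        by (rule MOST_mono[OF MOST_conjI]) (use ranked rank_cmp_Nblock[OF h True] in metis)
      then have "\<forall>\<^sub>\<infinity>m. r (Suc m) = r m"
        by (intro eventually_nonincreasing_stationary) (auto elim: MOST_mono)
      with descent have "\<forall>\<^sub>\<infinity>m::nat. False"
        by (rule MOST_mono[OF MOST_conjI]) auto
      then show False
        by simp
    qed
    then show ?thesis
      using True B(2) unfolding hesitant_accepting_iff by blast
  next
    case False
    then have U: "B \<in> a_Ublocks A"
      using B(1) by blast
    have cmp: "\<forall>\<^sub>\<infinity>m. if \<pi> m \<in> a_acc A then r (Suc m) < r m else r (Suc m) \<le> r m"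
      using stay by (rule MOST_mono) (use ranked rank_cmp_Ublock[OF h U] in metis)
    then have "\<forall>\<^sub>\<infinity>m. r (Suc m) = r m"
      by (intro eventually_nonincreasing_stationary) (auto elim: MOST_mono split: if_splits)
    with cmp have "\<forall>\<^sub>\<infinity>m. \<pi> m \<notin> a_acc A"
      by (rule MOST_mono[OF MOST_conjI]) auto
    then show ?thesis
      using U B(2) unfolding hesitant_accepting_iff by blast
  qed
qed

lemma m_run_Nil [simp]: "m_run M t [] = t"
  by (simp add: m_run_def)

lemma m_run_snoc [simp]: "m_run M t (w @ [d]) = m_trans M (m_run M t w) d"
  by (simp add: m_run_def)

lemma moore_systemD:
  assumes "moore_system M"
  shows "m_init M \<in> m_states M"
    and "t \<in> m_states M \<Longrightarrow> e \<subseteq> m_inputs M \<Longrightarrow> m_trans M t e \<in> m_states M"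
    and "t \<in> m_states M \<Longrightarrow> m_out M t \<subseteq> m_outputs M"
    and "finite (m_states M)"
  using assms by (simp_all add: moore_system_def)

lemma m_run_in_states:
  assumes "moore_system M" and "w \<in> lists (Pow (m_inputs M))"
  shows "m_run M (m_init M) w \<in> m_states M"
  using assms(2)
proof (induction w rule: rev_induct)
  case Nil
  then show ?case
    using assms(1) by (simp add: moore_system_def)
next
  case (snoc d w)
  then show ?case
    using assms(1) by (simp add: moore_system_def)
qed

lemma comp_tree_outputs:
  assumes "moore_system M" and "w \<in> lists (Pow (m_inputs M))"
  shows "comp_tree M w \<subseteq> m_outputs M"
  using m_run_in_states[OF assms] assms(1) by (simp add: comp_tree_def moore_system_def)

definition run_pos :: "('a, 's) moore \<Rightarrow> ('a, 'q) aht \<Rightarrow> ('a set \<times> 'q) list \<Rightarrow> 'q \<times> 's" where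
  "run_pos M A x = (run_state A x, m_run M (m_init M) (run_node x))"

definition prod_succ :: "('a, 's) moore \<Rightarrow> 'q \<times> 's \<Rightarrow> 'a set \<times> 'q \<Rightarrow> 'q \<times> 's" where
  "prod_succ M p a = (snd a, m_trans M (snd p) (fst a))"

definition prod_delta :: "('a, 's) moore \<Rightarrow> ('a, 'q) aht \<Rightarrow> 'q \<times> 's \<Rightarrow> ('a set \<times> 'q) pbf" where
  "prod_delta M A p = a_delta A (fst p) (m_out M (snd p))"

lemma run_pos_Nil [simp]: "run_pos M A [] = (a_init A, m_init M)"
  by (simp add: run_pos_def run_state_def run_node_def)

lemma run_pos_snoc [simp]: "run_pos M A (x @ [a]) = prod_succ M (run_pos M A x) a"
  by (simp add: run_pos_def prod_succ_def run_state_def run_node_def)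

lemma run_delta: "a_delta A (run_state A x) (comp_tree M (run_node x)) = prod_delta M A (run_pos M A x)"
  by (simp add: run_pos_def prod_delta_def comp_tree_def)

lemma run_state_branch:
  "(\<lambda>m. if m = 0 then a_init A else snd (\<beta> (m - 1))) = (\<lambda>m. fst (run_pos M A (map \<beta> [0..<m])))"
  by (rule ext) (auto simp: run_pos_def run_state_def gr0_conv_Suc)

lemma rank_constraint_prod:
  "rank_constraint M A rch \<rho> \<longleftrightarrow> rch (a_init A) (m_init M) \<and>
     (\<forall>p \<in> a_states A \<times> m_states M. case_prod rch p \<longrightarrow>
        pbf_eval (\<lambda>a. case_prod rch (prod_succ M p a) \<and>
                      rank_cmp A (fst p) (fst (prod_succ M p a)) (case_prod \<rho> p) (case_prod \<rho> (prod_succ M p a)))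
                 (prod_delta M A p))"
  by (simp add: rank_constraint_def prod_succ_def prod_delta_def case_prod_beta')

section \<open>Rankings yield accepting runs\<close>

locale ranked_system =
  fixes M :: "('a, 's) moore" and A :: "('a, 'q) aht"
    and rch :: "'q \<Rightarrow> 's \<Rightarrow> bool" and \<rho> :: "'q \<Rightarrow> 's \<Rightarrow> nat"
  assumes moore: "moore_system M"
    and hesitant: "hesitant_ata (m_inputs M) (m_outputs M) A"
    and ranked: "rank_constraint M A rch \<rho>"
begin

definition ranked_move :: "'q \<times> 's \<Rightarrow> 'a set \<times> 'q \<Rightarrow> bool" where
  "ranked_move p a \<longleftrightarrow> case_prod rch (prod_succ M p a) \<and>
     rank_cmp A (fst p) (fst (prod_succ M p a)) (case_prod \<rho> p) (case_prod \<rho> (prod_succ M p a))"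

definition ranked_run :: "('a set \<times> 'q) list set" where
  "ranked_run = admissible_words
     (\<lambda>y a. a \<in> pbf_atoms (prod_delta M A (run_pos M A y)) \<and> ranked_move (run_pos M A y) a)"

lemma ranked_run_snoc_iff:
  "y @ [a] \<in> ranked_run \<longleftrightarrow>
     y \<in> ranked_run \<and> a \<in> pbf_atoms (prod_delta M A (run_pos M A y)) \<and> ranked_move (run_pos M A y) a"
  unfolding ranked_run_def by (rule snoc_admissible_words_iff)

lemma ranked_move_sat:
  assumes "p \<in> a_states A \<times> m_states M" and "case_prod rch p"
  shows "pbf_eval (ranked_move p) (prod_delta M A p)"
  using ranked assms unfolding rank_constraint_prod ranked_move_def by blast

lemma atom_target:
  assumes "p \<in> a_states A \<times> m_states M" and "a \<in> pbf_atoms (prod_delta M A p)"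
  shows "a \<in> Pow (m_inputs M) \<times> a_states A" and "prod_succ M p a \<in> a_states A \<times> m_states M"
proof -
  have "m_out M (snd p) \<subseteq> m_outputs M"
    using assms(1) moore_systemD(3)[OF moore] by (auto simp: mem_Times_iff)
  then show a: "a \<in> Pow (m_inputs M) \<times> a_states A"
    using assms atom_in_states[OF hesitant, of "fst p" "m_out M (snd p)" "fst a" "snd a"]
    by (auto simp: prod_delta_def mem_Times_iff)
  then show "prod_succ M p a \<in> a_states A \<times> m_states M"
    using assms(1) moore_systemD(2)[OF moore] by (auto simp: prod_succ_def mem_Times_iff)
qed

lemma ranked_run_positions:
  assumes "y \<in> ranked_run"
  shows "run_pos M A y \<in> a_states A \<times> m_states M" and "case_prod rch (run_pos M A y)"
  using assms unfolding ranked_run_def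
proof (induction y)
  case Nil
  show "run_pos M A [] \<in> a_states A \<times> m_states M" "case_prod rch (run_pos M A [])"
    using hesitant moore_systemD(1)[OF moore] ranked by (simp_all add: hesitant_ata_def rank_constraint_def)
next
  case (snoc y a)
  then show "run_pos M A (y @ [a]) \<in> a_states A \<times> m_states M" "case_prod rch (run_pos M A (y @ [a]))"
    using atom_target(2) by (auto simp: ranked_move_def)
qed

lemma ranked_run_is_run: "is_run (m_inputs M) A (comp_tree M) ranked_run"
  unfolding is_run_def
proof (intro conjI allI impI ballI)
  show "[] \<in> ranked_run"
    by (simp add: ranked_run_def admissible_words.Nil)
next
  fix x a assume "x @ [a] \<in> ranked_run"
  then show "x \<in> ranked_run"
    by (simp add: ranked_run_snoc_iff)
next
  fix x assume x: "x \<in> ranked_run"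
  let ?p = "run_pos M A x"
  have children: "{a. x @ [a] \<in> ranked_run} = {a. a \<in> pbf_atoms (prod_delta M A ?p) \<and> ranked_move ?p a}"
    using x by (simp add: ranked_run_snoc_iff)
  show "{a. x @ [a] \<in> ranked_run} \<subseteq> Pow (m_inputs M) \<times> a_states A"
    unfolding children using atom_target(1)[OF ranked_run_positions(1)[OF x]] by blast
  have "pbf_eval (ranked_move ?p) (prod_delta M A ?p)"
    using ranked_move_sat ranked_run_positions[OF x] .
  then show "pbf_sat {a. x @ [a] \<in> ranked_run} (a_delta A (run_state A x) (comp_tree M (run_node x)))"
    unfolding children run_delta pbf_sat_def by (simp add: pbf_eval_restrict)
qed

lemma ranked_run_accepting:
  assumes branch: "\<forall>k. map \<beta> [0..<k] \<in> ranked_run"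
  shows "hesitant_accepting A (\<lambda>m. fst (run_pos M A (map \<beta> [0..<m])))"
proof (rule hesitant_accepting_if_ranked[OF hesitant])
  show "fst (run_pos M A (map \<beta> [0..<0])) \<in> a_states A"
    using hesitant by (simp add: hesitant_ata_def)
  fix m
  let ?p = "run_pos M A (map \<beta> [0..<m])"
  have step: "\<beta> m \<in> pbf_atoms (prod_delta M A ?p)" "ranked_move ?p (\<beta> m)"
    using branch[rule_format, of "Suc m"] by (simp_all add: ranked_run_snoc_iff)
  have "m_out M (snd ?p) \<subseteq> m_outputs M"
    using ranked_run_positions(1) branch moore_systemD(3)[OF moore] by (force simp: mem_Times_iff)
  moreover have "(fst (\<beta> m), fst (run_pos M A (map \<beta> [0..<Suc m]))) \<in> pbf_atoms (a_delta A (fst ?p) (m_out M (snd ?p)))"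
    using step(1) by (simp add: prod_delta_def prod_succ_def)
  ultimately show "\<exists>a d. a \<subseteq> m_outputs M \<and> (d, fst (run_pos M A (map \<beta> [0..<Suc m]))) \<in> pbf_atoms (a_delta A (fst ?p) a)"
    by blast
  show "rank_cmp A (fst ?p) (fst (run_pos M A (map \<beta> [0..<Suc m])))
          (case_prod \<rho> ?p) (case_prod \<rho> (run_pos M A (map \<beta> [0..<Suc m])))"
    using step(2) by (simp add: ranked_move_def)
qed

lemma accepts_comp_tree: "accepts (m_inputs M) A (comp_tree M)"
  unfolding accepts_def
proof (intro exI conjI allI impI)
  show "is_run (m_inputs M) A (comp_tree M) ranked_run"
    by (rule ranked_run_is_run)
  fix \<beta> assume "\<forall>k. map \<beta> [0..<k] \<in> ranked_run"
  then show "hesitant_accepting A (\<lambda>m. if m = 0 then a_init A else snd (\<beta> (m - 1)))"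
    unfolding run_state_branch[of A \<beta> M] by (rule ranked_run_accepting)
qed

end

section \<open>Accepting runs yield rankings\<close>

lemma run_positional_tree:
  assumes ms: "moore_system M" and h: "hesitant_ata (m_inputs M) (m_outputs M) A"
    and run: "is_run (m_inputs M) A (comp_tree M) R"
  shows "positional_tree R (run_pos M A) (prod_succ M) (prod_delta M A)"
proof
  have closed: "\<And>x a. x @ [a] \<in> R \<Longrightarrow> x \<in> R"
    and children: "\<And>x. x \<in> R \<Longrightarrow> {a. x @ [a] \<in> R} \<subseteq> Pow (m_inputs M) \<times> a_states A"
    and sat: "\<And>x. x \<in> R \<Longrightarrow> pbf_sat {a. x @ [a] \<in> R} (a_delta A (run_state A x) (comp_tree M (run_node x)))"
    using run unfolding is_run_def by blast+
  show "y @ [a] \<in> R \<Longrightarrow> y \<in> R" for y a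
    by (rule closed)
  show "run_pos M A (y @ [a]) = prod_succ M (run_pos M A y) a" for y a
    by simp
  show "pbf_eval (\<lambda>a. y @ [a] \<in> R) (prod_delta M A (run_pos M A y))" if "y \<in> R" for y
    using sat[OF that] by (simp add: run_delta pbf_sat_def)
  have "run_pos M A y \<in> a_states A \<times> m_states M" if "y \<in> R" for y
    using that
  proof (induction y rule: rev_induct)
    case Nil
    then show ?case
      using h moore_systemD(1)[OF ms] by (simp add: hesitant_ata_def)
  next
    case (snoc a y)
    then have "y \<in> R" "a \<in> Pow (m_inputs M) \<times> a_states A"
      using closed children by blast+
    then show ?case
      using snoc.IH moore_systemD(2)[OF ms] by (auto simp: prod_succ_def mem_Times_iff)
  qed
  then have "run_pos M A ` R \<subseteq> a_states A \<times> m_states M"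
    by blast
  moreover have "finite (a_states A \<times> m_states M)"
    using h moore_systemD(4)[OF ms] by (simp add: hesitant_ata_def)
  ultimately show "finite (run_pos M A ` R)"
    by (rule finite_subset)
qed

locale accepting_run =
  fixes M :: "('a, 's) moore" and A :: "('a, 'q) aht" and R :: "('a set \<times> 'q) list set"
  assumes moore: "moore_system M"
    and hesitant: "hesitant_ata (m_inputs M) (m_outputs M) A"
    and run: "is_run (m_inputs M) A (comp_tree M) R"
    and accepting: "\<And>\<beta>. \<forall>k. map \<beta> [0..<k] \<in> R \<Longrightarrow>
                      hesitant_accepting A (\<lambda>m. fst (run_pos M A (map \<beta> [0..<m])))"
begin

sublocale positional_tree R "run_pos M A" "prod_succ M" "prod_delta M A"
  by (rule run_positional_tree[OF moore hesitant run])

definition ranks_block :: "'q set \<Rightarrow> ('q \<times> 's \<Rightarrow> nat) \<Rightarrow> bool" where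
  "ranks_block B \<rho> \<longleftrightarrow> (\<forall>p \<in> run_pos M A ` R. fst p \<in> B \<longrightarrow>
     next_sat p (\<lambda>p'. rank_cmp A (fst p) (fst p') (\<rho> p) (\<rho> p')))"

lemma Nblock_ranking:
  assumes B: "B \<in> a_Nblocks A"
  shows "\<exists>\<rho>. ranks_block B \<rho>"
proof -
  obtain \<rho> :: "'q \<times> 's \<Rightarrow> nat" where \<rho>: "\<And>p. p \<in> run_pos M A ` R \<Longrightarrow> p \<in> {p. fst p \<in> B} \<Longrightarrow>
      p \<notin> {p. fst p \<in> a_acc A} \<Longrightarrow> next_sat p (\<lambda>p'. p' \<in> {p. fst p \<in> B} \<longrightarrow> \<rho> p' < \<rho> p)"
  proof (rule buchi_ranking)
    fix \<beta> assume "is_branch \<beta>" and "\<forall>\<^sub>\<infinity>k. run_pos M A (map \<beta> [0..<k]) \<in> {p. fst p \<in> B}"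
    then show "\<exists>\<^sub>\<infinity>k. run_pos M A (map \<beta> [0..<k]) \<in> {p. fst p \<in> a_acc A}"
      using hesitant_accepting_Nblock[OF hesitant B accepting] by (simp add: is_branch_def)
  qed (rule that)
  have "next_sat p (\<lambda>p'. rank_cmp A (fst p) (fst p') (\<rho> p) (\<rho> p'))"
    if p: "p \<in> run_pos M A ` R" "fst p \<in> B" for p
  proof (cases "fst p \<in> a_acc A")
    case True
    show ?thesis
      using next_sat_True[OF p(1)]
      by (rule next_sat_mono) (simp add: rank_cmp_Nblock[OF hesitant B p(2)] True)
  next
    case False
    show ?thesis
      using \<rho>[OF p(1)] p(2) False by (simp add: rank_cmp_Nblock[OF hesitant B p(2)])
  qed
  then show ?thesis
    unfolding ranks_block_def by blast
qed

lemma Ublock_ranking: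
  assumes B: "B \<in> a_Ublocks A"
  shows "\<exists>\<rho>. ranks_block B \<rho>"
proof -
  obtain \<rho> :: "'q \<times> 's \<Rightarrow> nat" where \<rho>: "\<And>p. p \<in> run_pos M A ` R \<Longrightarrow> p \<in> {p. fst p \<in> B} \<Longrightarrow>
      next_sat p (\<lambda>p'. p' \<in> {p. fst p \<in> B} \<longrightarrow>
        (if p \<in> {p. fst p \<in> a_acc A} then \<rho> p' < \<rho> p else \<rho> p' \<le> \<rho> p))"
  proof (rule cobuchi_ranking)
    fix \<beta> assume "is_branch \<beta>" and "\<forall>\<^sub>\<infinity>k. run_pos M A (map \<beta> [0..<k]) \<in> {p. fst p \<in> B}"
    then show "\<forall>\<^sub>\<infinity>k. run_pos M A (map \<beta> [0..<k]) \<notin> {p. fst p \<in> a_acc A}"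
      using hesitant_accepting_Ublock[OF hesitant B accepting] by (simp add: is_branch_def)
  qed (rule that)
  have "next_sat p (\<lambda>p'. rank_cmp A (fst p) (fst p') (\<rho> p) (\<rho> p'))"
    if p: "p \<in> run_pos M A ` R" "fst p \<in> B" for p
    using \<rho>[OF p(1)] p(2) by (simp add: rank_cmp_Ublock[OF hesitant B p(2)])
  then show ?thesis
    unfolding ranks_block_def by blast
qed

lemma combined_ranking:
  obtains \<rho> :: "'q \<times> 's \<Rightarrow> nat"
  where "\<And>p. p \<in> run_pos M A ` R \<Longrightarrow> fst p \<in> a_states A \<Longrightarrow>
           next_sat p (\<lambda>p'. rank_cmp A (fst p) (fst p') (\<rho> p) (\<rho> p'))"
proof -
  have "\<forall>B \<in> a_blocks A. \<exists>\<rho>. ranks_block B \<rho>"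
    using Nblock_ranking Ublock_ranking by blast
  from bchoice[OF this] obtain f where f: "\<forall>B \<in> a_blocks A. ranks_block B (f B)"
    by (elim exE) (rule that)
  define \<rho> where "\<rho> p = f (block_of A (fst p)) p" for p
  show thesis
  proof (rule that)
    fix p assume p: "p \<in> run_pos M A ` R" "fst p \<in> a_states A"
    define B where "B = block_of A (fst p)"
    have B: "B \<in> a_blocks A" "fst p \<in> B"
      using block_of[OF hesitant p(2)] by (simp_all add: B_def)
    then have "ranks_block B (f B)"
      using f by blast
    then have "next_sat p (\<lambda>p'. rank_cmp A (fst p) (fst p') (f B p) (f B p'))"
      using p(1) B(2) unfolding ranks_block_def by blast
    then show "next_sat p (\<lambda>p'. rank_cmp A (fst p) (fst p') (\<rho> p) (\<rho> p'))"
    proof (rule next_sat_mono)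
      fix p' assume "rank_cmp A (fst p) (fst p') (f B p) (f B p')"
      then show "rank_cmp A (fst p) (fst p') (\<rho> p) (\<rho> p')"
        using rank_cmp_other_block[OF hesitant B] block_of_eq[OF hesitant B(1)]
        by (cases "fst p' \<in> B") (simp_all add: \<rho>_def B_def)
    qed
  qed
qed

lemma rank_constraint_exists: "\<exists>rch \<rho>. rank_constraint M A rch \<rho>"
proof -
  obtain \<rho> where \<rho>: "\<And>p. p \<in> run_pos M A ` R \<Longrightarrow> fst p \<in> a_states A \<Longrightarrow>
      next_sat p (\<lambda>p'. rank_cmp A (fst p) (fst p') (\<rho> p) (\<rho> p'))"
    by (rule combined_ranking) (rule that)
  define rch where "rch q t \<longleftrightarrow> (q, t) \<in> run_pos M A ` R" for q t
  have "rank_constraint M A rch (curry \<rho>)"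
    unfolding rank_constraint_prod case_prod_curry
  proof (intro conjI ballI impI)
    have "[] \<in> R"
      using run by (simp add: is_run_def)
    then show "rch (a_init A) (m_init M)"
      unfolding rch_def by (metis image_eqI run_pos_Nil)
  next
    fix p assume p: "p \<in> a_states A \<times> m_states M" "case_prod rch p"
    then have "p \<in> run_pos M A ` R" and "fst p \<in> a_states A"
      by (auto simp: rch_def)
    then have "next_sat p (\<lambda>p'. case_prod rch p' \<and> rank_cmp A (fst p) (fst p') (\<rho> p) (\<rho> p'))"
      by (rule \<rho>[THEN next_sat_mono]) (auto simp: rch_def)
    then show "pbf_eval (\<lambda>a. case_prod rch (prod_succ M p a) \<and>
        rank_cmp A (fst p) (fst (prod_succ M p a)) (\<rho> p) (\<rho> (prod_succ M p a))) (prod_delta M A p)"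
      unfolding next_sat_def by (rule pbf_eval_mono) simp
  qed
  then show ?thesis
    by blast
qed

end

lemma rank_constraint_if_accepts:
  assumes "moore_system M" and "hesitant_ata (m_inputs M) (m_outputs M) A"
    and "accepts (m_inputs M) A (comp_tree M)"
  shows "\<exists>rch \<rho>. rank_constraint M A rch \<rho>"
proof -
  obtain R where run: "is_run (m_inputs M) A (comp_tree M) R"
    and acc: "\<forall>\<beta>. (\<forall>k. map \<beta> [0..<k] \<in> R) \<longrightarrow>
                   hesitant_accepting A (\<lambda>m. if m = 0 then a_init A else snd (\<beta> (m - 1)))"
    using assms(3) unfolding accepts_def by blast
  have "accepting_run M A R"
  proof
    fix \<beta> assume "\<forall>k. map \<beta> [0..<k] \<in> R"
    then show "hesitant_accepting A (\<lambda>m. fst (run_pos M A (map \<beta> [0..<m])))"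
      unfolding run_state_branch[of A \<beta> M, symmetric] using acc by blast
  qed (fact assms(1,2) run)+
  then show ?thesis
    by (rule accepting_run.rank_constraint_exists)
qed

theorem mainTheorem4:
  fixes M :: "('a, 's) moore" and \<Phi> :: "'a sform" and A :: "('a, 'q) aht"
  assumes "moore_system M"
    and "wf_sform (m_inputs M) (m_outputs M) \<Phi>"
    and "hesitant_ata (m_inputs M) (m_outputs M) A"
    and "\<forall>l. (\<forall>w \<in> lists (Pow (m_inputs M)). l w \<subseteq> m_outputs M) \<longrightarrow>
              (accepts (m_inputs M) A l \<longleftrightarrow> tree_sat (m_inputs M) l \<Phi>)"
  shows "moore_models M \<Phi> \<longleftrightarrow> (\<exists>rch \<rho>. rank_constraint M A rch \<rho>)"
proof -
  have "\<forall>w \<in> lists (Pow (m_inputs M)). comp_tree M w \<subseteq> m_outputs M"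
    using comp_tree_outputs[OF assms(1)] by blast
  then have "moore_models M \<Phi> \<longleftrightarrow> accepts (m_inputs M) A (comp_tree M)"
    using assms(4) by (simp add: moore_models_def)
  then show ?thesis
    using ranked_system.accepts_comp_tree[OF ranked_system.intro[OF assms(1,3)]]
      rank_constraint_if_accepts[OF assms(1,3)] by blast
qed

end
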